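(* Let $Z$ be a random variable with density $f$, CDF $F$ and $\overline F = 1-F$, satisfying: (a) continuous distribution with bounded density; (b) finite expectation; (c) support unbounded in the $+\infty$ direction; (d) the hazard rate $f(z)/\overline F(z)$ is eventually monotone. Then for every $\lambda>0$, the function $z\mapsto \overline F(z)e^{\lambda z}$ is eventually monotone.
   Context: A function $\phi$ is eventually monotone if there is $z_0\ge 0$ such that $\phi$ is non-decreasing on $(z_0,\infty)$ or non-increasing on $(z_0,\infty)$. *)

theory Defs
  imports "HOL-Probability.Probability"
begin

definition eventually_monotone :: "(real \<Rightarrow> real) \<Rightarrow> bool" where
  "eventually_monotone \<phi> \<longleftrightarrow>
     (\<exists>z0 \<ge> 0. mono_on {z0<..} \<phi> \<or> antimono_on {z0<..} \<phi>)"

end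

theory Submission
  imports Defs
begin

text \<open>Eventually the hazard rate \<open>h = f / Fbar\<close> stays on one side of \<open>c\<close>, since a monotone
  function crosses the level \<open>c\<close> at most once. If \<open>h \<ge> c\<close> there, then
  \<open>Fbar a - Fbar b = \<integral>\<^sub>a\<^sup>b f \<ge> c (b - a) Fbar b\<close>, and refining \<open>[a, b]\<close> into \<open>n\<close> pieces
  gives \<open>Fbar b (1 + c (b - a) / n)\<^sup>n \<le> Fbar a\<close>, hence \<open>Fbar b exp (c b) \<le> Fbar a exp (c a)\<close> in the limit;
  the case \<open>h \<le> c\<close> is symmetric.\<close>

lemma mono_on_imp_eventually_ge_or_le:
  fixes h :: "real \<Rightarrow> real"
  assumes "mono_on {z0<..} h"
  shows "\<exists>z1\<ge>z0. (\<forall>t>z1. c \<le> h t) \<or> (\<forall>t>z1. h t \<le> c)"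
proof (cases "\<exists>z1>z0. c \<le> h z1")
  case True
  then obtain z1 where "z1 > z0" "c \<le> h z1" by blast
  then have "c \<le> h t" if "t > z1" for t
    using monotone_onD[OF assms, of z1 t] that by simp
  then show ?thesis using \<open>z1 > z0\<close> by (intro exI[of _ z1]) auto
next
  case False
  then show ?thesis by force
qed

lemma eventually_monotone_imp_eventually_ge_or_le:
  assumes "eventually_monotone h"
  shows "\<exists>z1\<ge>0. (\<forall>t>z1. c \<le> h t) \<or> (\<forall>t>z1. h t \<le> c)"
proof -
  obtain z0 where "z0 \<ge> 0" and "mono_on {z0<..} h \<or> mono_on {z0<..} (\<lambda>t. - h t)"
    using assms unfolding eventually_monotone_def by (auto simp: monotone_on_def)
  then have "\<exists>z1\<ge>z0. (\<forall>t>z1. c \<le> h t) \<or> (\<forall>t>z1. h t \<le> c)"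
    using mono_on_imp_eventually_ge_or_le[of z0 h c]
      mono_on_imp_eventually_ge_or_le[of z0 "\<lambda>t. - h t" "- c"] by auto
  then show ?thesis using \<open>z0 \<ge> 0\<close> by (meson order_trans)
qed

lemma exp_bound_of_linear_steps:
  fixes \<phi> :: "real \<Rightarrow> real"
  assumes "a \<le> b"
    and step: "\<And>x y. a \<le> x \<Longrightarrow> x \<le> y \<Longrightarrow> y \<le> b \<Longrightarrow> \<phi> x * (1 + r * (y - x)) \<le> \<phi> y"
  shows "\<phi> a * exp (r * (b - a)) \<le> \<phi> b"
proof -
  have bound: "\<phi> a * (1 + r * (b - a) / n) ^ n \<le> \<phi> b"
    if n: "\<bar>r\<bar> * (b - a) \<le> n" "n > 0" for n :: nat
  proof -
    define d where "d = (b - a) / n"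
    have d: "d \<ge> 0" "a + n * d = b" using \<open>a \<le> b\<close> n by (simp_all add: d_def)
    have "- (r * d) \<le> \<bar>r\<bar> * d"
      using d(1) by (metis abs_ge_minus_self abs_mult abs_of_nonneg)
    also have "\<bar>r\<bar> * d \<le> 1"
      using n by (simp add: d_def field_simps)
    finally have "1 + r * d \<ge> 0" by simp
    have "\<phi> a * (1 + r * d) ^ k \<le> \<phi> (a + k * d)" if "k \<le> n" for k
      using that
    proof (induction k)
      case 0
      then show ?case by simp
    next
      case (Suc k)
      have "a + Suc k * d \<le> b"
        using Suc.prems d by (metis add_le_cancel_left mult_right_mono of_nat_le_iff)
      then have "\<phi> (a + k * d) * (1 + r * d) \<le> \<phi> (a + Suc k * d)"
        using step[of "a + k * d" "a + Suc k * d"] d(1) by (simp add: algebra_simps)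
      moreover have "\<phi> a * (1 + r * d) ^ k * (1 + r * d) \<le> \<phi> (a + k * d) * (1 + r * d)"
        using Suc \<open>1 + r * d \<ge> 0\<close> by (intro mult_right_mono) auto
      ultimately show ?case by (simp add: algebra_simps)
    qed
    from this[of n] show ?thesis using d by (simp add: d_def)
  qed
  have "(\<lambda>n. \<phi> a * (1 + r * (b - a) / n) ^ n) \<longlonglongrightarrow> \<phi> a * exp (r * (b - a))"
    by (intro tendsto_mult tendsto_const tendsto_exp_limit_sequentially)
  then show ?thesis
  proof (rule LIMSEQ_le_const2)
    show "\<exists>N. \<forall>n\<ge>N. \<phi> a * (1 + r * (b - a) / n) ^ n \<le> \<phi> b"
      using bound by (intro exI[of _ "nat \<lceil>\<bar>r\<bar> * (b - a)\<rceil> + 1"]) (auto intro!: bound; linarith)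
  qed
qed

locale survival_density =
  fixes Fbar f :: "real \<Rightarrow> real"
  assumes nonneg: "Fbar z \<ge> 0"
    and antimono: "antimono Fbar"
    and diff_eq_integral:
      "a \<le> b \<Longrightarrow> ennreal (Fbar a - Fbar b) = (\<integral>\<^sup>+x\<in>{a<..b}. ennreal (f x) \<partial>lborel)"
begin

lemma diff_ge_of_density_ge:
  assumes "a \<le> b" "k \<ge> 0" "\<And>t. a < t \<Longrightarrow> t \<le> b \<Longrightarrow> k \<le> f t"
  shows "k * (b - a) \<le> Fbar a - Fbar b"
proof -
  have "ennreal (k * (b - a)) = (\<integral>\<^sup>+x\<in>{a<..b}. ennreal k \<partial>lborel)"
    using assms(1,2) by (simp add: nn_integral_cmult_indicator ennreal_mult)
  also have "\<dots> \<le> (\<integral>\<^sup>+x\<in>{a<..b}. ennreal (f x) \<partial>lborel)"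
    using assms(3) by (intro nn_integral_mono) (auto split: split_indicator intro: ennreal_leI)
  also have "\<dots> = ennreal (Fbar a - Fbar b)"
    using diff_eq_integral[OF assms(1)] by simp
  finally show ?thesis
    using antimono assms(1) by (simp add: ennreal_le_iff antimonoD)
qed

lemma diff_le_of_density_le:
  assumes "a \<le> b" "k \<ge> 0" "\<And>t. a < t \<Longrightarrow> t \<le> b \<Longrightarrow> f t \<le> k"
  shows "Fbar a - Fbar b \<le> k * (b - a)"
proof -
  have "ennreal (Fbar a - Fbar b) = (\<integral>\<^sup>+x\<in>{a<..b}. ennreal (f x) \<partial>lborel)"
    using diff_eq_integral[OF assms(1)] by simp
  also have "\<dots> \<le> (\<integral>\<^sup>+x\<in>{a<..b}. ennreal k \<partial>lborel)"
    using assms(3) by (intro nn_integral_mono) (auto split: split_indicator intro: ennreal_leI)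
  also have "\<dots> = ennreal (k * (b - a))"
    using assms(1,2) by (simp add: nn_integral_cmult_indicator ennreal_mult)
  finally show ?thesis
    using assms(1,2) by (simp add: ennreal_le_iff)
qed

lemma antimono_on_mult_exp:
  assumes "c \<ge> 0" and hazard_ge: "\<And>t. z1 < t \<Longrightarrow> c * Fbar t \<le> f t"
  shows "antimono_on {z1<..} (\<lambda>z. Fbar z * exp (c * z))"
proof (rule monotone_onI)
  fix a b assume "a \<in> {z1<..}" "b \<in> {z1<..}" "a \<le> b"
  \<comment> \<open>the reflection \<open>u \<mapsto> Fbar (- u)\<close> turns the decay estimate into a growth estimate\<close>
  have "(\<lambda>u. Fbar (- u)) (- b) * exp (c * (- a - - b)) \<le> (\<lambda>u. Fbar (- u)) (- a)"
  proof (rule exp_bound_of_linear_steps)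
    fix u v assume "- b \<le> u" "u \<le> v" "v \<le> - a"
    have "c * Fbar (- u) * (- u - - v) \<le> Fbar (- v) - Fbar (- u)"
    proof (rule diff_ge_of_density_ge)
      fix t assume "- v < t" "t \<le> - u"
      then have "c * Fbar (- u) \<le> c * Fbar t"
        using \<open>c \<ge> 0\<close> antimono by (simp add: antimonoD mult_left_mono)
      also have "\<dots> \<le> f t"
        using hazard_ge \<open>a \<in> {z1<..}\<close> \<open>v \<le> - a\<close> \<open>- v < t\<close> by simp
      finally show "c * Fbar (- u) \<le> f t" .
    qed (use \<open>u \<le> v\<close> \<open>c \<ge> 0\<close> nonneg in auto)
    then show "Fbar (- u) * (1 + c * (v - u)) \<le> Fbar (- v)"
      by (simp add: algebra_simps)
  qed (use \<open>a \<le> b\<close> in simp)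
  then have "Fbar b * exp (c * (b - a)) * exp (c * a) \<le> Fbar a * exp (c * a)"
    by (simp add: mult_right_mono)
  then show "Fbar b * exp (c * b) \<le> Fbar a * exp (c * a)"
    by (simp add: mult.assoc exp_add[symmetric] algebra_simps)
qed

lemma mono_on_mult_exp:
  assumes "c \<ge> 0" and hazard_le: "\<And>t. z1 < t \<Longrightarrow> f t \<le> c * Fbar t"
  shows "mono_on {z1<..} (\<lambda>z. Fbar z * exp (c * z))"
proof (rule monotone_onI)
  fix a b assume "a \<in> {z1<..}" "b \<in> {z1<..}" "a \<le> b"
  have "Fbar a * exp (- c * (b - a)) \<le> Fbar b"
  proof (rule exp_bound_of_linear_steps)
    fix x y assume "a \<le> x" "x \<le> y" "y \<le> b"
    have "Fbar x - Fbar y \<le> c * Fbar x * (y - x)"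
    proof (rule diff_le_of_density_le)
      fix t assume "x < t" "t \<le> y"
      then have "f t \<le> c * Fbar t"
        using hazard_le \<open>a \<in> {z1<..}\<close> \<open>a \<le> x\<close> by simp
      also have "\<dots> \<le> c * Fbar x"
        using \<open>c \<ge> 0\<close> antimono \<open>x < t\<close> by (simp add: antimonoD mult_left_mono)
      finally show "f t \<le> c * Fbar x" .
    qed (use \<open>x \<le> y\<close> \<open>c \<ge> 0\<close> nonneg in auto)
    then show "Fbar x * (1 + - c * (y - x)) \<le> Fbar y"
      by (simp add: algebra_simps)
  qed (use \<open>a \<le> b\<close> in simp)
  then have "Fbar a * exp (- c * (b - a)) * exp (c * b) \<le> Fbar b * exp (c * b)"
    by (simp add: mult_right_mono)
  then show "Fbar a * exp (c * a) \<le> Fbar b * exp (c * b)"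
    by (simp add: mult.assoc exp_add[symmetric] algebra_simps)
qed

end

lemma survival_density_of_distributed:
  assumes "prob_space M" and density: "distributed M lborel Z (\<lambda>x. ennreal (f x))"
  shows "survival_density (\<lambda>z. 1 - measure M {\<omega> \<in> space M. Z \<omega> \<le> z}) f"
proof -
  interpret prob_space M by fact
  define L where "L z = {\<omega> \<in> space M. Z \<omega> \<le> z}" for z
  have Z_measurable: "Z \<in> measurable M lborel"
    using density by (simp add: distributed_def)
  have L_sets: "L z \<in> sets M" for z
    using measurable_sets[OF Z_measurable, of "{..z}"]
    by (simp add: L_def vimage_def Int_def conj_commute)
  have L_mono: "L a \<subseteq> L b" if "a \<le> b" for a b
    using that by (auto simp: L_def)
  show ?thesis
    unfolding L_def[symmetric]
  proof
    show "1 - measure M (L z) \<ge> 0" for z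
      by (simp add: prob_le_1)
    show "antimono (\<lambda>z. 1 - measure M (L z))"
      by (intro antimonoI) (simp add: finite_measure_mono[OF L_mono L_sets])
  next
    fix a b :: real assume "a \<le> b"
    have "L b - L a = Z -` {a<..b} \<inter> space M"
      by (auto simp: L_def)
    then have "ennreal (measure M (L b - L a)) = (\<integral>\<^sup>+x\<in>{a<..b}. ennreal (f x) \<partial>lborel)"
      using distributed_emeasure[OF density] by (simp add: emeasure_eq_measure[symmetric])
    then show "ennreal (1 - measure M (L a) - (1 - measure M (L b)))
        = (\<integral>\<^sup>+x\<in>{a<..b}. ennreal (f x) \<partial>lborel)"
      using finite_measure_Diff[OF L_sets L_sets L_mono[OF \<open>a \<le> b\<close>]] by simp
  qed
qed

theorem lemma6:
  fixes M :: "'a measure" and Z :: "'a \<Rightarrow> real" and f :: "real \<Rightarrow> real"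
    and F Fbar :: "real \<Rightarrow> real"
  assumes "prob_space M"
    and f_meas: "f \<in> borel_measurable lborel"
    and f_nonneg: "\<And>x. f x \<ge> 0"
    and density: "distributed M lborel Z (\<lambda>x. ennreal (f x))"
    and F_def: "\<And>z. F z = measure M {\<omega> \<in> space M. Z \<omega> \<le> z}"
    and Fbar_def: "\<And>z. Fbar z = 1 - F z"
    and bounded: "\<exists>B. \<forall>x. f x \<le> B"
    and finite_exp: "integrable M Z"
    and unbounded_support: "\<And>z. Fbar z > 0"
    and hazard: "eventually_monotone (\<lambda>z. f z / Fbar z)"
    and lam: "(c::real) > 0"
  shows "eventually_monotone (\<lambda>z. Fbar z * exp (c * z))"
proof -
  have "Fbar = (\<lambda>z. 1 - measure M {\<omega> \<in> space M. Z \<omega> \<le> z})"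
    using F_def Fbar_def by auto
  then interpret survival_density Fbar f
    using survival_density_of_distributed[OF \<open>prob_space M\<close> density] by simp
  have hazard_ge_iff: "c \<le> f z / Fbar z \<longleftrightarrow> c * Fbar z \<le> f z"
    and hazard_le_iff: "f z / Fbar z \<le> c \<longleftrightarrow> f z \<le> c * Fbar z" for z
    using unbounded_support[of z] by (simp_all add: pos_le_divide_eq pos_divide_le_eq)
  obtain z1 where "z1 \<ge> 0"
    and "(\<forall>t>z1. c * Fbar t \<le> f t) \<or> (\<forall>t>z1. f t \<le> c * Fbar t)"
    using eventually_monotone_imp_eventually_ge_or_le[OF hazard, of c]
    unfolding hazard_ge_iff hazard_le_iff by blast
  then have "mono_on {z1<..} (\<lambda>z. Fbar z * exp (c * z))
      \<or> antimono_on {z1<..} (\<lambda>z. Fbar z * exp (c * z))"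
    using mono_on_mult_exp antimono_on_mult_exp lam by (meson less_imp_le)
  then show ?thesis
    unfolding eventually_monotone_def using \<open>z1 \<ge> 0\<close> by blast
qed

end
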